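(* Let $(X,*,0)$ be a solid branchwise implicative weak BCC-algebra. Then $X$ is branchwise positive implicative if and only if $X$ is a commutative BCK-algebra.
   Context: A weak BCC-algebra is a set $X$ with a binary operation $*$ and a constant $0$ satisfying, for all $x,y,z\in X$: (i) $((x*y)*(z*y))*(x*z)=0$; (ii) $x*x=0$; (iii) $x*0=x$; (iv) $x*y=y*x=0$ implies $x=y$. The relation $x\leqslant y$ iff $x*y=0$ is a partial order on $X$. Let $I(X)$ be the set of minimal elements of $X$ with respect to $\leqslant$. For $a\in I(X)$ the branch initiated by $a$ is $B(a)=\{x\in X: a\leqslant x\}$; "belonging to the same branch" means lying in a common $B(a)$. A weak BCC-algebra is called (left) solid if $(x*y)*z=(x*z)*y$ holds for all $x,y$ belonging to the same branch and all $z\in X$. It is branchwise implicative if $x*(y*x)=x$ for all $x,y$ in the same branch, and branchwise positive implicative if $(x*y)*y=x*y$ for all $x,y$ in the same branch. A BCK-algebra is a weak BCC-algebra satisfying $0*x=0$ and $(x*y)*z=(x*z)*y$ for all $x,y,z$; it is commutative if $x*(x*y)=y*(y*x)$ for all $x,y$. *)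

theory Defs
  imports Main
begin

text \<open>A weak BCC-algebra is given by a carrier set X, a binary operation m (written *),
and a constant e (written 0).  All axioms are relativised to the carrier.\<close>

definition weak_BCC :: "'a set \<Rightarrow> ('a \<Rightarrow> 'a \<Rightarrow> 'a) \<Rightarrow> 'a \<Rightarrow> bool" where
  "weak_BCC X m e \<longleftrightarrow>
     e \<in> X \<and> (\<forall>x\<in>X. \<forall>y\<in>X. m x y \<in> X) \<and>
     (\<forall>x\<in>X. \<forall>y\<in>X. \<forall>z\<in>X. m (m (m x y) (m z y)) (m x z) = e) \<and>
     (\<forall>x\<in>X. m x x = e) \<and>
     (\<forall>x\<in>X. m x e = x) \<and>
     (\<forall>x\<in>X. \<forall>y\<in>X. m x y = e \<and> m y x = e \<longrightarrow> x = y)"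

definition bcc_le :: "('a \<Rightarrow> 'a \<Rightarrow> 'a) \<Rightarrow> 'a \<Rightarrow> 'a \<Rightarrow> 'a \<Rightarrow> bool" where
  "bcc_le m e x y \<longleftrightarrow> m x y = e"

definition minimals :: "'a set \<Rightarrow> ('a \<Rightarrow> 'a \<Rightarrow> 'a) \<Rightarrow> 'a \<Rightarrow> 'a set" where
  "minimals X m e = {a \<in> X. \<forall>x\<in>X. bcc_le m e x a \<longrightarrow> x = a}"

definition branch :: "'a set \<Rightarrow> ('a \<Rightarrow> 'a \<Rightarrow> 'a) \<Rightarrow> 'a \<Rightarrow> 'a \<Rightarrow> 'a set" where
  "branch X m e a = {x \<in> X. bcc_le m e a x}"

definition same_branch :: "'a set \<Rightarrow> ('a \<Rightarrow> 'a \<Rightarrow> 'a) \<Rightarrow> 'a \<Rightarrow> 'a \<Rightarrow> 'a \<Rightarrow> bool" where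
  "same_branch X m e x y \<longleftrightarrow>
     (\<exists>a\<in>minimals X m e. x \<in> branch X m e a \<and> y \<in> branch X m e a)"

definition solid :: "'a set \<Rightarrow> ('a \<Rightarrow> 'a \<Rightarrow> 'a) \<Rightarrow> 'a \<Rightarrow> bool" where
  "solid X m e \<longleftrightarrow> weak_BCC X m e \<and>
     (\<forall>x\<in>X. \<forall>y\<in>X. \<forall>z\<in>X. same_branch X m e x y \<longrightarrow> m (m x y) z = m (m x z) y)"

definition branchwise_implicative :: "'a set \<Rightarrow> ('a \<Rightarrow> 'a \<Rightarrow> 'a) \<Rightarrow> 'a \<Rightarrow> bool" where
  "branchwise_implicative X m e \<longleftrightarrow>
     (\<forall>x\<in>X. \<forall>y\<in>X. same_branch X m e x y \<longrightarrow> m x (m y x) = x)"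

definition branchwise_positive_implicative :: "'a set \<Rightarrow> ('a \<Rightarrow> 'a \<Rightarrow> 'a) \<Rightarrow> 'a \<Rightarrow> bool" where
  "branchwise_positive_implicative X m e \<longleftrightarrow>
     (\<forall>x\<in>X. \<forall>y\<in>X. same_branch X m e x y \<longrightarrow> m (m x y) y = m x y)"

definition BCK :: "'a set \<Rightarrow> ('a \<Rightarrow> 'a \<Rightarrow> 'a) \<Rightarrow> 'a \<Rightarrow> bool" where
  "BCK X m e \<longleftrightarrow> weak_BCC X m e \<and> (\<forall>x\<in>X. m e x = e) \<and>
     (\<forall>x\<in>X. \<forall>y\<in>X. \<forall>z\<in>X. m (m x y) z = m (m x z) y)"

definition commutative_BCK :: "'a set \<Rightarrow> ('a \<Rightarrow> 'a \<Rightarrow> 'a) \<Rightarrow> 'a \<Rightarrow> bool" where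
  "commutative_BCK X m e \<longleftrightarrow> BCK X m e \<and>
     (\<forall>x\<in>X. \<forall>y\<in>X. m x (m x y) = m y (m y x))"

end

theory Submission
  imports Defs
begin

text \<open>Every element x lies in the branch of the minimal element a = 0 * (0 * x), and a \<le> x; positive
  implicativity for the pair a, x gives 0 * x = (a * x) * x = a * x = 0.  So 0 is the only
  minimal element, X is a single branch, and solidity and implicativity hold globally: X is an
  implicative BCK-algebra.  Conversely a commutative BCK-algebra is a single branch as well.  It
  remains to see that implicative BCK-algebras are commutative and positive implicative; for
  commutativity, y * (y * u) = u whenever u \<le> y, applied to u = x * (x * y), gives
  x * (x * y) \<le> y * (y * x), and symmetry does the rest.\<close>

locale weak_bcc =
  fixes X :: "'a set" and m :: "'a \<Rightarrow> 'a \<Rightarrow> 'a" and e :: 'a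
  assumes zero_closed: "e \<in> X"
    and op_closed: "\<And>x y. x \<in> X \<Longrightarrow> y \<in> X \<Longrightarrow> m x y \<in> X"
    and bcc_axiom: "\<And>x y z. x \<in> X \<Longrightarrow> y \<in> X \<Longrightarrow> z \<in> X \<Longrightarrow> m (m (m x y) (m z y)) (m x z) = e"
    and op_self: "\<And>x. x \<in> X \<Longrightarrow> m x x = e"
    and op_zero: "\<And>x. x \<in> X \<Longrightarrow> m x e = x"
    and le_antisym: "\<And>x y. x \<in> X \<Longrightarrow> y \<in> X \<Longrightarrow> m x y = e \<Longrightarrow> m y x = e \<Longrightarrow> x = y"

lemma weak_BCC_iff_weak_bcc: "weak_BCC X m e \<longleftrightarrow> weak_bcc X m e"
  unfolding weak_BCC_def weak_bcc_def by blast

context weak_bcc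
begin

lemma zero_zero_le: "x \<in> X \<Longrightarrow> m (m e (m e x)) x = e"
  by (metis bcc_axiom op_zero zero_closed)

lemma op_antitone_right:
  "x \<in> X \<Longrightarrow> y \<in> X \<Longrightarrow> z \<in> X \<Longrightarrow> m y z = e \<Longrightarrow> m (m x z) (m x y) = e"
  by (metis bcc_axiom op_zero op_closed)

lemma zero_op_eq_if_le: "x \<in> X \<Longrightarrow> y \<in> X \<Longrightarrow> m y x = e \<Longrightarrow> m e y = m e x"
  by (smt (verit, del_insts) bcc_axiom op_zero le_antisym zero_zero_le op_closed)

lemma zero_op_triple: assumes x: "x \<in> X" shows "m e (m e (m e x)) = m e x"
proof (rule le_antisym)
  show "m (m e (m e (m e x))) (m e x) = e"
    using zero_zero_le[OF op_closed[OF zero_closed x]] .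
  show "m (m e x) (m e (m e (m e x))) = e"
    by (intro op_antitone_right zero_zero_le op_closed zero_closed x)
qed (intro op_closed zero_closed x)+

lemma zero_zero_minimal: assumes x: "x \<in> X" shows "m e (m e x) \<in> minimals X m e"
proof -
  let ?a = "m e (m e x)"
  have aX: "?a \<in> X" by (intro op_closed zero_closed x)
  have "y = ?a" if y: "y \<in> X" "m y ?a = e" for y
  proof -
    have "m e (m e y) = m e (m e ?a)" using zero_op_eq_if_le[OF aX y] by simp
    also have "\<dots> = ?a" using zero_op_triple[OF op_closed[OF zero_closed x]] by simp
    finally have "m ?a y = e" using zero_zero_le[OF y(1)] by simp
    thus ?thesis using le_antisym[OF aX y(1)] y(2) by simp
  qed
  thus ?thesis using aX unfolding minimals_def bcc_le_def by blast
qed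

lemma same_branch_zero_zero: assumes x: "x \<in> X" shows "same_branch X m e (m e (m e x)) x"
proof -
  have aX: "m e (m e x) \<in> X" by (intro op_closed zero_closed x)
  show ?thesis
    unfolding same_branch_def branch_def bcc_le_def
    using zero_zero_minimal[OF x] aX op_self[OF aX] x zero_zero_le[OF x] by blast
qed

lemma same_branch_if_zero_least:
  assumes "\<And>x. x \<in> X \<Longrightarrow> m e x = e" and "x \<in> X" and "y \<in> X"
  shows "same_branch X m e x y"
proof -
  have "e \<in> minimals X m e"
    using zero_closed op_zero unfolding minimals_def bcc_le_def by auto
  thus ?thesis using assms unfolding same_branch_def branch_def bcc_le_def by blast
qed

lemma zero_least_if_branchwise_positive_implicative:
  assumes "branchwise_positive_implicative X m e" and x: "x \<in> X"
  shows "m e x = e"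
proof -
  let ?a = "m e (m e x)"
  have "m (m ?a x) x = m ?a x"
    using assms same_branch_zero_zero[OF x] op_closed zero_closed
    unfolding branchwise_positive_implicative_def by blast
  thus ?thesis using zero_zero_le[OF x] by simp
qed

end

locale implicative_bck = weak_bcc +
  assumes zero_op: "\<And>x. x \<in> X \<Longrightarrow> m e x = e"
    and exchange: "\<And>x y z. x \<in> X \<Longrightarrow> y \<in> X \<Longrightarrow> z \<in> X \<Longrightarrow> m (m x y) z = m (m x z) y"
    and implicative: "\<And>x y. x \<in> X \<Longrightarrow> y \<in> X \<Longrightarrow> m x (m y x) = x"
begin

lemma op_le_left: "x \<in> X \<Longrightarrow> y \<in> X \<Longrightarrow> m (m x y) x = e"
  by (metis exchange op_self zero_op)

lemma op_op_le_right: "x \<in> X \<Longrightarrow> y \<in> X \<Longrightarrow> m (m x (m x y)) y = e"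
  by (metis op_self op_closed exchange)

lemma op_op_eq_if_le:
  assumes u: "u \<in> X" and y: "y \<in> X" and uy: "m u y = e"
  shows "m y (m y u) = u"
proof (rule le_antisym)
  have yu: "m y u \<in> X" by (intro op_closed u y)
  show "m (m y (m y u)) u = e" using exchange[OF y yu u] op_self[OF yu] by simp
  have "m (m (m u (m y u)) (m y (m y u))) (m u y) = e" using bcc_axiom[OF u yu y] .
  thus "m u (m y (m y u)) = e"
    using implicative[OF u y] uy op_zero op_closed[OF u op_closed[OF y yu]] by simp
qed (intro op_closed u y)+

lemma commutative_le:
  assumes x: "x \<in> X" and y: "y \<in> X"
  shows "m (m x (m x y)) (m y (m y x)) = e"
proof -
  let ?u = "m x (m x y)"
  have u: "?u \<in> X" by (intro op_closed x y)
  have "m (m y x) (m y ?u) = e"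
    using op_antitone_right[OF y u x op_le_left[OF x op_closed[OF x y]]] .
  hence "m (m y (m y ?u)) (m y (m y x)) = e"
    using op_antitone_right[OF y op_closed[OF y x] op_closed[OF y u]] by blast
  thus ?thesis using op_op_eq_if_le[OF u y op_op_le_right[OF x y]] by simp
qed

lemma commutative: "x \<in> X \<Longrightarrow> y \<in> X \<Longrightarrow> m x (m x y) = m y (m y x)"
  by (rule le_antisym) (simp_all add: commutative_le op_closed)

lemma positive_implicative: "x \<in> X \<Longrightarrow> y \<in> X \<Longrightarrow> m (m x y) y = m x y"
  by (metis op_closed implicative)

lemma commutative_BCK: "commutative_BCK X m e"
  using weak_bcc_axioms zero_op exchange commutative
  unfolding commutative_BCK_def BCK_def weak_BCC_iff_weak_bcc by blast

lemma branchwise_positive_implicative: "branchwise_positive_implicative X m e"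
  using positive_implicative unfolding branchwise_positive_implicative_def by blast

end

lemma (in weak_bcc) implicative_bck_if_zero_least:
  assumes "\<And>x. x \<in> X \<Longrightarrow> m e x = e"
    and "solid X m e" and "branchwise_implicative X m e"
  shows "implicative_bck X m e"
proof unfold_locales
  note same = same_branch_if_zero_least[OF assms(1)]
  show "\<And>x. x \<in> X \<Longrightarrow> m e x = e" by (fact assms(1))
  show "\<And>x y z. x \<in> X \<Longrightarrow> y \<in> X \<Longrightarrow> z \<in> X \<Longrightarrow> m (m x y) z = m (m x z) y"
    using assms(2) same unfolding solid_def by blast
  show "\<And>x y. x \<in> X \<Longrightarrow> y \<in> X \<Longrightarrow> m x (m y x) = x"
    using assms(3) same unfolding branchwise_implicative_def by blast
qed

theorem theorem3p9:
  fixes X :: "'a set" and m :: "'a \<Rightarrow> 'a \<Rightarrow> 'a" and e :: 'a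
  assumes "weak_BCC X m e" and "solid X m e" and "branchwise_implicative X m e"
  shows "branchwise_positive_implicative X m e \<longleftrightarrow> commutative_BCK X m e"
proof -
  interpret weak_bcc X m e using assms(1) by (simp add: weak_BCC_iff_weak_bcc)
  note implicative_bck = implicative_bck_if_zero_least[OF _ assms(2,3)]
  show ?thesis
  proof
    assume "branchwise_positive_implicative X m e"
    hence "implicative_bck X m e"
      by (intro implicative_bck zero_least_if_branchwise_positive_implicative)
    thus "commutative_BCK X m e" by (rule implicative_bck.commutative_BCK)
  next
    assume "commutative_BCK X m e"
    hence "implicative_bck X m e"
      by (intro implicative_bck) (simp add: commutative_BCK_def BCK_def)
    thus "branchwise_positive_implicative X m e"
      by (rule implicative_bck.branchwise_positive_implicative)
  qed
qed

end
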